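(* Let $k$ be a positive-definite kernel on $\mathcal X$, $l$ a positive-definite kernel on $\mathcal Y$, and $h((x,y),(x',y'))=k(x,x')l(y,y')$. Suppose $\sup_{x\in\mathcal X,y\in\mathcal Y}h((x,y),(x,y))\le\nu^2$ for some $\nu>0$. Then for $(X,Y)\sim P_{xy}$, $$\frac1{2\nu^2}\mathrm{HSIC}(X,Y)\le I(X;Y)\qquad\text{and}\qquad-\log\Bigl(1-\frac1{4\nu^2}\mathrm{HSIC}(X,Y)\Bigr)\le I(X;Y).$$
   Context: $I(X;Y)=\mathrm{KL}(P_{xy}\,\|\,P_x\times P_y)$ (natural logarithm) is the Shannon mutual information, $P_x,P_y$ the marginals. $\mathrm{HSIC}_{k,l}(X,Y)=\mathbb E\bigl[k(X,X')l(Y,Y')-2k(X,X')l(Y,Y'')+k(X,X')l(Y'',Y''')\bigr]$, where $(X,Y),(X',Y')\sim P_{xy}$ and $Y'',Y'''\sim P_y$ are all independent; equivalently the squared Hilbert–Schmidt norm of the cross-covariance operator of the feature maps of $k$ and $l$. *)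

theory Defs
  imports "HOL-Probability.Probability"
begin

definition pd_kernel :: "'a set \<Rightarrow> ('a \<Rightarrow> 'a \<Rightarrow> real) \<Rightarrow> bool" where
  "pd_kernel S k \<longleftrightarrow>
     (\<forall>x\<in>S. \<forall>y\<in>S. k x y = k y x) \<and>
     (\<forall>(n::nat) (x::nat \<Rightarrow> 'a) (c::nat \<Rightarrow> real). (\<forall>i<n. x i \<in> S) \<longrightarrow>
        0 \<le> (\<Sum>i<n. \<Sum>j<n. c i * c j * k (x i) (x j)))"

text \<open>KL divergence KL(P || Q) with natural logarithm, valued in the extended reals:
  +infinity unless P is absolutely continuous w.r.t. Q and ln (dP/dQ) is P-integrable
  (its negative part is always P-integrable, so non-integrability means +infinity).\<close>
definition KL_div :: "'a measure \<Rightarrow> 'a measure \<Rightarrow> ereal" where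
  "KL_div P Q =
     (if sets P = sets Q \<and> absolutely_continuous Q P \<and>
         integrable P (\<lambda>z. ln (enn2real (RN_deriv Q P z)))
      then ereal (\<integral>z. ln (enn2real (RN_deriv Q P z)) \<partial>P)
      else \<infinity>)"

definition mutual_info :: "'a measure \<Rightarrow> 'b measure \<Rightarrow> ('a \<times> 'b) measure \<Rightarrow> ereal" where
  "mutual_info MX MY P = KL_div P (distr P MX fst \<Otimes>\<^sub>M distr P MY snd)"

text \<open>HSIC_{k,l}(X,Y) = E[k(X,X')l(Y,Y') - 2 k(X,X')l(Y,Y'') + k(X,X')l(Y'',Y''')]
  with (X,Y),(X',Y') ~ P and Y'',Y''' ~ P_y, all independent.\<close>
definition HSIC :: "'a measure \<Rightarrow> 'b measure \<Rightarrow> ('a \<times> 'b) measure \<Rightarrow>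
    ('a \<Rightarrow> 'a \<Rightarrow> real) \<Rightarrow> ('b \<Rightarrow> 'b \<Rightarrow> real) \<Rightarrow> real" where
  "HSIC MX MY P k l =
     (\<integral>w. (case w of (xy, xy', y2, y3) \<Rightarrow>
              k (fst xy) (fst xy') * l (snd xy) (snd xy')
              - 2 * k (fst xy) (fst xy') * l (snd xy) y2
              + k (fst xy) (fst xy') * l y2 y3)
        \<partial>(P \<Otimes>\<^sub>M P \<Otimes>\<^sub>M distr P MY snd \<Otimes>\<^sub>M distr P MY snd))"

end

theory Submission
  imports Defs
begin

text \<open>
  Let \<open>\<rho>\<close> be the density of \<open>P\<^sub>x\<^sub>y\<close> with respect to \<open>Q = P\<^sub>x \<times> P\<^sub>y\<close> and \<open>h\<close> the product
  kernel. HSIC is the squared MMD of \<open>P\<^sub>x\<^sub>y\<close> and \<open>Q\<close> for \<open>h\<close>, i.e.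
  \<open>\<integral>\<integral> (\<rho> z - 1) (\<rho> w - 1) h z w dQ dQ\<close>, and \<open>\<bar>h\<bar> \<le> \<nu>\<^sup>2\<close> by Cauchy-Schwarz for the two kernels, so
  \<open>HSIC \<le> \<nu>\<^sup>2 L\<^sup>2\<close> with \<open>L = \<integral> \<bar>\<rho> - 1\<bar> dQ\<close>. Pinsker's inequality \<open>L\<^sup>2 \<le> 2 K\<close> and the
  Bretagnolle-Huber inequality \<open>exp (- K) \<le> 1 - L\<^sup>2 / 4\<close>, where \<open>K\<close> is the mutual information,
  give the two bounds. Both follow from a Cauchy-Schwarz argument: Pinsker from the pointwise
  inequality \<open>3 (x - 1)\<^sup>2 \<le> (2 x + 4) (x ln x - x + 1)\<close>, Bretagnolle-Huber from
  \<open>(\<integral> \<surd>\<rho>)\<^sup>2 \<le> \<integral> min \<rho> 1 \<cdot> \<integral> max \<rho> 1 = 1 - L\<^sup>2 / 4\<close> together with Jensen's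
  \<open>\<integral> \<surd>\<rho> \<ge> exp (- K / 2)\<close>. Without absolute continuity the mutual information is infinite.
\<close>

lemma one_minus_inverse_le_ln:
  fixes x :: real
  assumes "0 < x"
  shows "1 - 1 / x \<le> ln x"
  using ln_le_minus_one[of "1 / x"] assms by (simp add: ln_div)

lemma x_minus_one_le_x_ln_x:
  fixes x :: real
  assumes "0 \<le> x"
  shows "x - 1 \<le> x * ln x"
proof (cases "x = 0")
  case False
  then have "x * (1 - 1 / x) \<le> x * ln x"
    using assms one_minus_inverse_le_ln by (intro mult_left_mono) auto
  with False show ?thesis
    by (simp add: algebra_simps)
qed simp

lemma
  fixes x :: real
  shows add_one_mult_ln_le_of_le_one: "0 < x \<Longrightarrow> x \<le> 1 \<Longrightarrow> (x + 1) * ln x \<le> 2 * (x - 1)"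
    and add_one_mult_ln_ge_of_ge_one: "1 \<le> x \<Longrightarrow> 2 * (x - 1) \<le> (x + 1) * ln x"
proof -
  define g where "g y = (y + 1) * ln y - 2 * (y - 1)" for y :: real
  have g_mono: "g a \<le> g b" if "0 < a" "a \<le> b" for a b
  proof (rule DERIV_nonneg_imp_nondecreasing[OF \<open>a \<le> b\<close>])
    fix y assume "a \<le> y" "y \<le> b"
    with \<open>0 < a\<close> have "0 < y" by linarith
    then have "(g has_real_derivative ln y + 1 / y - 1) (at y)"
      unfolding g_def by (auto intro!: derivative_eq_intros simp: field_simps)
    moreover have "0 \<le> ln y + 1 / y - 1"
      using one_minus_inverse_le_ln[OF \<open>0 < y\<close>] by simp
    ultimately show "\<exists>d. (g has_real_derivative d) (at y) \<and> 0 \<le> d"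
      by blast
  qed
  show "0 < x \<Longrightarrow> x \<le> 1 \<Longrightarrow> (x + 1) * ln x \<le> 2 * (x - 1)"
    using g_mono[of x 1] by (simp add: g_def)
  show "1 \<le> x \<Longrightarrow> 2 * (x - 1) \<le> (x + 1) * ln x"
    using g_mono[of 1 x] by (simp add: g_def)
qed

lemma pinsker_pointwise:
  fixes x :: real
  assumes "0 \<le> x"
  shows "3 * (x - 1)\<^sup>2 \<le> (2 * x + 4) * (x * ln x - x + 1)"
proof -
  define f where "f y = (2 * y + 4) * (y * ln y - y + 1) - 3 * (y - 1)\<^sup>2" for y :: real
  have f_deriv: "(f has_real_derivative 4 * ((y + 1) * ln y - 2 * (y - 1))) (at y)" if "0 < y" for y
    unfolding f_def using that
    by (auto intro!: derivative_eq_intros simp: field_simps power2_eq_square)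
  consider "x = 0" | "0 < x" "x \<le> 1" | "1 \<le> x"
    using assms by linarith
  then have "f 1 \<le> f x"
  proof cases
    case 1
    then show ?thesis by (simp add: f_def)
  next
    case 2
    show ?thesis
    proof (rule DERIV_nonpos_imp_nonincreasing[OF \<open>x \<le> 1\<close>])
      fix y assume "x \<le> y" "y \<le> 1"
      with 2 show "\<exists>d. (f has_real_derivative d) (at y) \<and> d \<le> 0"
        using f_deriv[of y] add_one_mult_ln_le_of_le_one[of y] by force
    qed
  next
    case 3
    show ?thesis
    proof (rule DERIV_nonneg_imp_nondecreasing[OF \<open>1 \<le> x\<close>])
      fix y assume "1 \<le> y" "y \<le> x"
      then show "\<exists>d. (f has_real_derivative d) (at y) \<and> 0 \<le> d"
        using f_deriv[of y] add_one_mult_ln_ge_of_ge_one[of y] by force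
    qed
  qed
  then show ?thesis
    by (simp add: f_def)
qed

text \<open>This is \<open>exp t * (1 + s) \<le> exp (t + s)\<close> with \<open>t = ln x - c\<close> and \<open>s = c - ln x / 2\<close>;
  integrated against a density \<open>\<rho>\<close> with \<open>c = K / 2\<close>, \<open>K = \<integral> \<rho> ln \<rho>\<close>, it gives Jensen's
  inequality \<open>\<integral> \<surd>\<rho> \<ge> exp (- K / 2)\<close>.\<close>
lemma exp_tangent_le_sqrt:
  fixes x c :: real
  assumes "0 \<le> x"
  shows "exp (- c) * (x - x * ln x / 2 + c * x) \<le> sqrt x"
proof (cases "x = 0")
  case False
  with assms have "0 < x" by simp
  then have "exp (ln x - c) = x * exp (- c)"
    by (simp add: exp_diff exp_minus field_simps)
  then have "exp (- c) * (x - x * ln x / 2 + c * x) = exp (ln x - c) * (1 + (c - ln x / 2))"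
    by (simp add: algebra_simps)
  also have "\<dots> \<le> exp (ln x - c) * exp (c - ln x / 2)"
    by (intro mult_left_mono exp_ge_add_one_self) simp
  also have "\<dots> = exp (ln x / 2)"
    by (simp flip: exp_add)
  also have "\<dots> = sqrt x"
    using \<open>0 < x\<close> by (simp add: powr_half_sqrt[symmetric] powr_def)
  finally show ?thesis .
qed simp

lemma two_mult_le_scaled_sum:
  fixes u a b s :: real
  assumes "0 \<le> a" "0 \<le> b" "0 < s" "u\<^sup>2 \<le> a * b"
  shows "2 * u \<le> s * a + b / s"
proof -
  have "(2 * u)\<^sup>2 \<le> 4 * (a * b)"
    using \<open>u\<^sup>2 \<le> a * b\<close> by (simp add: power_mult_distrib)
  also have "\<dots> \<le> (s * a - b / s)\<^sup>2 + 4 * (a * b)"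
    by simp
  also have "\<dots> = (s * a + b / s)\<^sup>2"
    using \<open>0 < s\<close> by (simp add: power2_eq_square field_simps)
  finally have "(2 * u)\<^sup>2 \<le> (s * a + b / s)\<^sup>2" .
  moreover have "0 \<le> s * a + b / s"
    using assms by simp
  ultimately show ?thesis
    by (rule power2_le_imp_le)
qed

lemma sq_le_mult_if_scaled_bounds:
  fixes u a b :: real
  assumes "0 \<le> u" "0 \<le> a" "0 \<le> b" and bound: "\<And>s. 0 < s \<Longrightarrow> 2 * u \<le> s * a + b / s"
  shows "u\<^sup>2 \<le> a * b"
proof -
  consider "u = 0" | "0 < u" "a = 0" | "0 < u" "0 < a"
    using assms by linarith
  then show ?thesis
  proof cases
    case 1
    with assms show ?thesis by simp
  next
    case 2
    have "0 < b / u + 1"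
      using 2 assms by (simp add: add_nonneg_pos)
    from bound[OF this] 2 have "2 * u \<le> b / (b / u + 1)"
      by simp
    also have "\<dots> < u"
      using 2 assms by (simp add: field_simps)
    finally show ?thesis
      using 2 by simp
  next
    case 3
    have "2 * u \<le> u + a * b / u"
      using bound[of "u / a"] 3 by (simp add: field_simps)
    with 3 show ?thesis
      by (simp add: field_simps power2_eq_square)
  qed
qed

lemma Cauchy_Schwarz_integral:
  fixes u a b :: "'a \<Rightarrow> real"
  assumes "integrable M u" "integrable M a" "integrable M b"
    and "\<And>x. x \<in> space M \<Longrightarrow> 0 \<le> u x" "\<And>x. x \<in> space M \<Longrightarrow> 0 \<le> a x"
    and "\<And>x. x \<in> space M \<Longrightarrow> 0 \<le> b x" "\<And>x. x \<in> space M \<Longrightarrow> (u x)\<^sup>2 \<le> a x * b x"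
  shows "(\<integral>x. u x \<partial>M)\<^sup>2 \<le> (\<integral>x. a x \<partial>M) * (\<integral>x. b x \<partial>M)"
proof (rule sq_le_mult_if_scaled_bounds)
  fix s :: real
  assume "0 < s"
  have "(\<integral>x. 2 * u x \<partial>M) \<le> (\<integral>x. s * a x + b x / s \<partial>M)"
    using assms \<open>0 < s\<close> by (intro integral_mono two_mult_le_scaled_sum) auto
  with assms show "2 * (\<integral>x. u x \<partial>M) \<le> s * (\<integral>x. a x \<partial>M) + (\<integral>x. b x \<partial>M) / s"
    by simp
qed (use assms in \<open>auto intro!: integral_nonneg_AE\<close>)

lemma pair_prob_spaceI: "prob_space A \<Longrightarrow> prob_space B \<Longrightarrow> pair_prob_space A B"
  by (simp add: pair_prob_space_def pair_sigma_finite_def prob_space_imp_sigma_finite)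

lemma
  fixes f :: "'a \<times> 'b \<Rightarrow> real"
  assumes "prob_space A" "prob_space B" and [measurable]: "f \<in> borel_measurable (A \<Otimes>\<^sub>M B)"
    and bound: "\<And>a b. a \<in> space A \<Longrightarrow> b \<in> space B \<Longrightarrow> \<bar>f (a, b)\<bar> \<le> C"
  shows integral_pair_bounded: "integral\<^sup>L (A \<Otimes>\<^sub>M B) f = (\<integral>a. \<integral>b. f (a, b) \<partial>B \<partial>A)"
    and iterated_integral_swap_bounded: "(\<integral>b. \<integral>a. f (a, b) \<partial>A \<partial>B) = (\<integral>a. \<integral>b. f (a, b) \<partial>B \<partial>A)"
proof -
  interpret pair_prob_space A B
    using assms(1,2) by (rule pair_prob_spaceI)
  have integrable: "integrable (A \<Otimes>\<^sub>M B) f"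
  proof (rule P.integrable_const_bound[where B = C])
    show "AE x in A \<Otimes>\<^sub>M B. norm (f x) \<le> C"
      using bound by (intro AE_I2) (auto simp: space_pair_measure)
  qed (rule assms(3))
  show "integral\<^sup>L (A \<Otimes>\<^sub>M B) f = (\<integral>a. \<integral>b. f (a, b) \<partial>B \<partial>A)"
    by (rule integral_fst'[OF integrable, symmetric])
  show "(\<integral>b. \<integral>a. f (a, b) \<partial>A \<partial>B) = (\<integral>a. \<integral>b. f (a, b) \<partial>B \<partial>A)"
    by (rule Fubini_integral[of "\<lambda>a b. f (a, b)", unfolded case_prod_eta, OF integrable])
qed

context prob_space
begin

lemma abs_integral_le_bound:
  fixes f :: "'a \<Rightarrow> real"
  assumes [measurable]: "f \<in> borel_measurable M" and bound: "\<And>x. x \<in> space M \<Longrightarrow> \<bar>f x\<bar> \<le> c"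
  shows "\<bar>\<integral>x. f x \<partial>M\<bar> \<le> c"
proof -
  have "\<bar>\<integral>x. f x \<partial>M\<bar> \<le> (\<integral>x. \<bar>f x\<bar> \<partial>M)"
    by (rule integral_abs_bound)
  also have "\<dots> \<le> c"
    using bound by (intro integral_le_const AE_I2 integrable_const_bound[where B = c]) auto
  finally show ?thesis .
qed

context
  fixes \<rho> :: "'a \<Rightarrow> real"
  assumes density_measurable: "\<rho> \<in> borel_measurable M"
    and density_nonneg: "\<And>x. x \<in> space M \<Longrightarrow> 0 \<le> \<rho> x"
    and density_integrable: "integrable M \<rho>"
    and density_integral: "(\<integral>x. \<rho> x \<partial>M) = 1"
begin

lemma abs_density_mult_le:
  assumes "x \<in> space M" "\<bar>g x\<bar> \<le> c"
  shows "\<bar>\<rho> x * g x\<bar> \<le> c * \<rho> x"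
  using mult_left_mono[OF assms(2) density_nonneg[OF assms(1)]] density_nonneg[OF assms(1)]
  by (simp add: abs_mult mult.commute)

lemma integrable_density_mult:
  assumes [measurable]: "g \<in> borel_measurable M" and bound: "\<And>x. x \<in> space M \<Longrightarrow> \<bar>g x\<bar> \<le> c"
  shows "integrable M (\<lambda>x. \<rho> x * g x)"
proof (rule Bochner_Integration.integrable_bound[where f = "\<lambda>x. c * \<rho> x"])
  show "AE x in M. norm (\<rho> x * g x) \<le> norm (c * \<rho> x)"
  proof (rule AE_I2)
    fix x assume "x \<in> space M"
    then have "\<bar>\<rho> x * g x\<bar> \<le> c * \<rho> x"
      by (intro abs_density_mult_le bound)
    then show "norm (\<rho> x * g x) \<le> norm (c * \<rho> x)"
      by (metis abs_ge_self order.trans real_norm_def)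
  qed
qed (use density_integrable in auto)

lemma abs_integral_density_mult_le:
  assumes [measurable]: "g \<in> borel_measurable M" and bound: "\<And>x. x \<in> space M \<Longrightarrow> \<bar>g x\<bar> \<le> c"
  shows "\<bar>\<integral>x. \<rho> x * g x \<partial>M\<bar> \<le> c"
proof -
  have "\<bar>\<integral>x. \<rho> x * g x \<partial>M\<bar> \<le> (\<integral>x. \<bar>\<rho> x * g x\<bar> \<partial>M)"
    by (rule integral_abs_bound)
  also have "\<dots> \<le> (\<integral>x. c * \<rho> x \<partial>M)"
    using integrable_abs[OF integrable_density_mult[OF assms]] density_integrable
      abs_density_mult_le[OF _ bound]
    by (intro integral_mono) auto
  also have "\<dots> = c"
    using density_integral by simp
  finally show ?thesis .
qed

lemma pinsker_density:
  assumes "integrable M (\<lambda>x. \<rho> x * ln (\<rho> x))"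
  shows "(\<integral>x. \<bar>\<rho> x - 1\<bar> \<partial>M)\<^sup>2 \<le> 2 * (\<integral>x. \<rho> x * ln (\<rho> x) \<partial>M)"
proof -
  have "(\<integral>x. \<bar>\<rho> x - 1\<bar> \<partial>M)\<^sup>2 \<le> (\<integral>x. (2 * \<rho> x + 4) / 3 \<partial>M) * (\<integral>x. \<rho> x * ln (\<rho> x) - \<rho> x + 1 \<partial>M)"
  proof (rule Cauchy_Schwarz_integral)
    fix x assume "x \<in> space M"
    with density_nonneg have "0 \<le> \<rho> x" by blast
    then show "\<bar>\<rho> x - 1\<bar>\<^sup>2 \<le> (2 * \<rho> x + 4) / 3 * (\<rho> x * ln (\<rho> x) - \<rho> x + 1)"
      using pinsker_pointwise[of "\<rho> x"] by simp
    show "0 \<le> \<rho> x * ln (\<rho> x) - \<rho> x + 1"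
      using x_minus_one_le_x_ln_x[OF \<open>0 \<le> \<rho> x\<close>] by simp
  qed (use assms density_integrable density_nonneg in auto)
  also have "\<dots> = 2 * (\<integral>x. \<rho> x * ln (\<rho> x) \<partial>M)"
    using assms density_integrable density_integral prob_space by simp
  finally show ?thesis .
qed

lemma integrable_sqrt_density: "integrable M (\<lambda>x. sqrt (\<rho> x))"
proof (rule Bochner_Integration.integrable_bound[where f = "\<lambda>x. (1 + \<rho> x) / 2"])
  show "AE x in M. norm (sqrt (\<rho> x)) \<le> norm ((1 + \<rho> x) / 2)"
  proof (rule AE_I2)
    fix x assume "x \<in> space M"
    then have "0 \<le> \<rho> x" by (rule density_nonneg)
    then have "2 * sqrt (\<rho> x) \<le> 1 * 1 + \<rho> x / 1"
      by (intro two_mult_le_scaled_sum) auto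
    with \<open>0 \<le> \<rho> x\<close> show "norm (sqrt (\<rho> x)) \<le> norm ((1 + \<rho> x) / 2)"
      by simp
  qed
qed (use density_integrable in auto)

lemma integral_sqrt_density_sq_le: "(\<integral>x. sqrt (\<rho> x) \<partial>M)\<^sup>2 \<le> 1 - (\<integral>x. \<bar>\<rho> x - 1\<bar> \<partial>M)\<^sup>2 / 4"
proof -
  define L where "L = (\<integral>x. \<bar>\<rho> x - 1\<bar> \<partial>M)"
  have "(\<integral>x. min (\<rho> x) 1 \<partial>M) = (\<integral>x. (\<rho> x + 1 - \<bar>\<rho> x - 1\<bar>) / 2 \<partial>M)"
    by (intro Bochner_Integration.integral_cong) auto
  also have "\<dots> = 1 - L / 2"
    using density_integrable density_integral prob_space by (simp add: L_def)
  finally have min_integral: "(\<integral>x. min (\<rho> x) 1 \<partial>M) = 1 - L / 2" .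
  have "(\<integral>x. max (\<rho> x) 1 \<partial>M) = (\<integral>x. (\<rho> x + 1 + \<bar>\<rho> x - 1\<bar>) / 2 \<partial>M)"
    by (intro Bochner_Integration.integral_cong) auto
  also have "\<dots> = 1 + L / 2"
    using density_integrable density_integral prob_space by (simp add: L_def)
  finally have max_integral: "(\<integral>x. max (\<rho> x) 1 \<partial>M) = 1 + L / 2" .
  have "(\<integral>x. sqrt (\<rho> x) \<partial>M)\<^sup>2 \<le> (\<integral>x. min (\<rho> x) 1 \<partial>M) * (\<integral>x. max (\<rho> x) 1 \<partial>M)"
  proof (rule Cauchy_Schwarz_integral)
    fix x assume "x \<in> space M"
    then show "(sqrt (\<rho> x))\<^sup>2 \<le> min (\<rho> x) 1 * max (\<rho> x) 1"
      using density_nonneg by (simp add: min_def max_def)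
  qed (use integrable_sqrt_density density_integrable density_nonneg in auto)
  also have "\<dots> = 1 - L\<^sup>2 / 4"
    unfolding min_integral max_integral by (simp add: power2_eq_square algebra_simps)
  finally show ?thesis
    by (simp add: L_def)
qed

lemma exp_neg_half_le_integral_sqrt_density:
  assumes "integrable M (\<lambda>x. \<rho> x * ln (\<rho> x))"
  shows "exp (- (\<integral>x. \<rho> x * ln (\<rho> x) \<partial>M) / 2) \<le> (\<integral>x. sqrt (\<rho> x) \<partial>M)"
proof -
  define K where "K = (\<integral>x. \<rho> x * ln (\<rho> x) \<partial>M)"
  have "exp (- K / 2) = (\<integral>x. exp (- (K / 2)) * (\<rho> x - \<rho> x * ln (\<rho> x) / 2 + K / 2 * \<rho> x) \<partial>M)"
    using assms density_integrable density_integral by (simp add: K_def)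
  also have "\<dots> \<le> (\<integral>x. sqrt (\<rho> x) \<partial>M)"
    using assms density_integrable integrable_sqrt_density density_nonneg
    by (intro integral_mono exp_tangent_le_sqrt) auto
  finally show ?thesis
    by (simp add: K_def)
qed

lemma bretagnolle_huber_density:
  assumes "integrable M (\<lambda>x. \<rho> x * ln (\<rho> x))"
  shows "exp (- (\<integral>x. \<rho> x * ln (\<rho> x) \<partial>M)) \<le> 1 - (\<integral>x. \<bar>\<rho> x - 1\<bar> \<partial>M)\<^sup>2 / 4"
proof -
  define K where "K = (\<integral>x. \<rho> x * ln (\<rho> x) \<partial>M)"
  have "exp (- K) = (exp (- K / 2))\<^sup>2"
    by (simp add: power2_eq_square flip: exp_add)
  also have "\<dots> \<le> (\<integral>x. sqrt (\<rho> x) \<partial>M)\<^sup>2"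
    using exp_neg_half_le_integral_sqrt_density[OF assms] by (intro power_mono) (auto simp: K_def)
  also have "\<dots> \<le> 1 - (\<integral>x. \<bar>\<rho> x - 1\<bar> \<partial>M)\<^sup>2 / 4"
    by (rule integral_sqrt_density_sq_le)
  finally show ?thesis
    by (simp add: K_def)
qed

context
  fixes h :: "'a \<Rightarrow> 'a \<Rightarrow> real" and c :: real
  assumes kernel_measurable: "(\<lambda>(z, w). h z w) \<in> borel_measurable (M \<Otimes>\<^sub>M M)"
    and kernel_symmetric: "\<And>z w. z \<in> space M \<Longrightarrow> w \<in> space M \<Longrightarrow> h z w = h w z"
    and kernel_bounded: "\<And>z w. z \<in> space M \<Longrightarrow> w \<in> space M \<Longrightarrow> \<bar>h z w\<bar> \<le> c"
begin

lemma kernel_section_measurable: "z \<in> space M \<Longrightarrow> h z \<in> borel_measurable M"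
  using measurable_Pair2[OF kernel_measurable] by simp

lemma integral_density_kernel_swap:
  "(\<integral>z. \<integral>w. \<rho> w * h z w \<partial>M \<partial>M) = (\<integral>z. \<rho> z * (\<integral>w. h z w \<partial>M) \<partial>M)"
proof -
  note [measurable] = density_measurable kernel_measurable
  have pair: "pair_sigma_finite M M"
    by (simp add: pair_sigma_finite_def sigma_finite_measure_axioms)
  have abs_integral_eq: "(\<integral>w. \<bar>\<rho> w * h z w\<bar> \<partial>M) = (\<integral>w. \<rho> w * \<bar>h z w\<bar> \<partial>M)" for z
    using density_nonneg by (intro Bochner_Integration.integral_cong) (auto simp: abs_mult)
  have "\<bar>\<integral>w. \<rho> w * \<bar>h z w\<bar> \<partial>M\<bar> \<le> c" if "z \<in> space M" for z
    using that kernel_bounded kernel_section_measurable[OF that]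
    by (intro abs_integral_density_mult_le borel_measurable_abs) auto
  then have "integrable M (\<lambda>z. \<integral>w. \<bar>\<rho> w * h z w\<bar> \<partial>M)"
    unfolding abs_integral_eq by (intro integrable_const_bound[where B = c] AE_I2) auto
  moreover have "AE z in M. integrable M (\<lambda>w. \<rho> w * h z w)"
    using kernel_bounded by (intro AE_I2 integrable_density_mult) auto
  ultimately have "integrable (M \<Otimes>\<^sub>M M) (\<lambda>(z, w). \<rho> w * h z w)"
    by (intro pair_sigma_finite.Fubini_integrable[OF pair]) auto
  then have "(\<integral>w. \<integral>z. \<rho> w * h z w \<partial>M \<partial>M) = (\<integral>z. \<integral>w. \<rho> w * h z w \<partial>M \<partial>M)"
    by (rule pair_sigma_finite.Fubini_integral[OF pair])
  moreover have "(\<integral>z. h z w \<partial>M) = (\<integral>z. h w z \<partial>M)" if "w \<in> space M" for w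
    using kernel_symmetric that by (intro Bochner_Integration.integral_cong) auto
  then have "(\<integral>w. \<integral>z. \<rho> w * h z w \<partial>M \<partial>M) = (\<integral>w. \<rho> w * (\<integral>z. h w z \<partial>M) \<partial>M)"
    by (intro Bochner_Integration.integral_cong) auto
  ultimately show ?thesis
    by simp
qed

lemma abs_integral_centered_kernel_le:
  assumes "z \<in> space M"
  shows "\<bar>(\<integral>w. \<rho> w * h z w \<partial>M) - (\<integral>w. h z w \<partial>M)\<bar> \<le> c * (\<integral>w. \<bar>\<rho> w - 1\<bar> \<partial>M)"
proof -
  note [measurable] = kernel_section_measurable[OF assms]
  have h_integrable: "integrable M (h z)"
    using assms kernel_bounded by (intro integrable_const_bound[where B = c] AE_I2) auto
  have \<rho>h_integrable: "integrable M (\<lambda>w. \<rho> w * h z w)"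
    using assms kernel_bounded by (intro integrable_density_mult) auto
  have "\<bar>(\<integral>w. \<rho> w * h z w \<partial>M) - (\<integral>w. h z w \<partial>M)\<bar> = \<bar>\<integral>w. (\<rho> w - 1) * h z w \<partial>M\<bar>"
    using h_integrable \<rho>h_integrable by (simp add: left_diff_distrib)
  also have "\<dots> \<le> (\<integral>w. \<bar>(\<rho> w - 1) * h z w\<bar> \<partial>M)"
    by (rule integral_abs_bound)
  also have "\<dots> \<le> (\<integral>w. c * \<bar>\<rho> w - 1\<bar> \<partial>M)"
  proof (rule integral_mono)
    show "integrable M (\<lambda>w. \<bar>(\<rho> w - 1) * h z w\<bar>)"
      using h_integrable \<rho>h_integrable by (simp add: left_diff_distrib)
    show "\<bar>(\<rho> w - 1) * h z w\<bar> \<le> c * \<bar>\<rho> w - 1\<bar>" if "w \<in> space M" for w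
      using mult_left_mono[OF kernel_bounded[OF assms that], of "\<bar>\<rho> w - 1\<bar>"]
      by (simp add: abs_mult mult.commute)
  qed (use density_integrable in auto)
  finally show ?thesis
    by simp
qed

lemma mmd_density_eq_centered:
  defines "D z \<equiv> (\<integral>w. \<rho> w * h z w \<partial>M) - (\<integral>w. h z w \<partial>M)"
  shows "(\<integral>z. \<rho> z * (\<integral>w. \<rho> w * h z w \<partial>M) \<partial>M) - 2 * (\<integral>z. \<rho> z * (\<integral>w. h z w \<partial>M) \<partial>M)
      + (\<integral>z. \<integral>w. h z w \<partial>M \<partial>M) = (\<integral>z. (\<rho> z - 1) * D z \<partial>M)"
    and "integrable M (\<lambda>z. (\<rho> z - 1) * D z)"
proof -
  define mean_P where "mean_P z = (\<integral>w. \<rho> w * h z w \<partial>M)" for z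
  define mean_M where "mean_M z = (\<integral>w. h z w \<partial>M)" for z
  note [measurable] = density_measurable kernel_measurable
  have [measurable]: "mean_P \<in> borel_measurable M" "mean_M \<in> borel_measurable M"
    unfolding mean_P_def mean_M_def by measurable
  have "\<bar>mean_P z\<bar> \<le> c" if "z \<in> space M" for z
    unfolding mean_P_def using that kernel_bounded by (intro abs_integral_density_mult_le) auto
  moreover have "\<bar>mean_M z\<bar> \<le> c" if "z \<in> space M" for z
    unfolding mean_M_def using that kernel_bounded by (intro abs_integral_le_bound) auto
  ultimately have integrable: "integrable M mean_P" "integrable M mean_M"
    "integrable M (\<lambda>z. \<rho> z * mean_P z)" "integrable M (\<lambda>z. \<rho> z * mean_M z)"
    by (auto intro!: integrable_const_bound[where B = c] AE_I2 integrable_density_mult)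
  have swap: "(\<integral>z. mean_P z \<partial>M) = (\<integral>z. \<rho> z * mean_M z \<partial>M)"
    unfolding mean_P_def mean_M_def by (rule integral_density_kernel_swap)
  have integrable_D: "integrable M (\<lambda>z. \<rho> z * (mean_P z - mean_M z))" "integrable M (\<lambda>z. mean_P z - mean_M z)"
    using integrable by (simp_all add: right_diff_distrib)
  have "(\<integral>z. \<rho> z * mean_P z \<partial>M) - 2 * (\<integral>z. \<rho> z * mean_M z \<partial>M) + (\<integral>z. mean_M z \<partial>M)
      = (\<integral>z. \<rho> z * (mean_P z - mean_M z) \<partial>M) - (\<integral>z. mean_P z - mean_M z \<partial>M)"
    using integrable swap by (simp add: right_diff_distrib)
  also have "\<dots> = (\<integral>z. (\<rho> z - 1) * (mean_P z - mean_M z) \<partial>M)"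
    using integrable_D by (simp add: left_diff_distrib)
  finally show "(\<integral>z. \<rho> z * (\<integral>w. \<rho> w * h z w \<partial>M) \<partial>M) - 2 * (\<integral>z. \<rho> z * (\<integral>w. h z w \<partial>M) \<partial>M)
      + (\<integral>z. \<integral>w. h z w \<partial>M \<partial>M) = (\<integral>z. (\<rho> z - 1) * D z \<partial>M)"
    by (simp add: mean_P_def mean_M_def D_def)
  show "integrable M (\<lambda>z. (\<rho> z - 1) * D z)"
    using integrable_D by (simp add: D_def mean_P_def mean_M_def left_diff_distrib)
qed

lemma mmd_density_le:
  "(\<integral>z. \<rho> z * (\<integral>w. \<rho> w * h z w \<partial>M) \<partial>M) - 2 * (\<integral>z. \<rho> z * (\<integral>w. h z w \<partial>M) \<partial>M)
      + (\<integral>z. \<integral>w. h z w \<partial>M \<partial>M)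
    \<le> c * (\<integral>z. \<bar>\<rho> z - 1\<bar> \<partial>M)\<^sup>2"
proof -
  define L where "L = (\<integral>z. \<bar>\<rho> z - 1\<bar> \<partial>M)"
  define D where "D z = (\<integral>w. \<rho> w * h z w \<partial>M) - (\<integral>w. h z w \<partial>M)" for z
  have "(\<integral>z. (\<rho> z - 1) * D z \<partial>M) \<le> (\<integral>z. \<bar>\<rho> z - 1\<bar> * (c * L) \<partial>M)"
  proof (rule integral_mono)
    show "integrable M (\<lambda>z. (\<rho> z - 1) * D z)"
      unfolding D_def by (rule mmd_density_eq_centered(2))
    fix z assume "z \<in> space M"
    have "(\<rho> z - 1) * D z \<le> \<bar>\<rho> z - 1\<bar> * \<bar>D z\<bar>"
      by (metis abs_ge_self abs_mult)
    also have "\<dots> \<le> \<bar>\<rho> z - 1\<bar> * (c * L)"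
      using abs_integral_centered_kernel_le[OF \<open>z \<in> space M\<close>]
      unfolding D_def L_def by (intro mult_left_mono) auto
    finally show "(\<rho> z - 1) * D z \<le> \<bar>\<rho> z - 1\<bar> * (c * L)" .
  qed (use density_integrable in auto)
  also have "\<dots> = c * L\<^sup>2"
    by (simp add: L_def power2_eq_square)
  finally show ?thesis
    unfolding D_def L_def mmd_density_eq_centered(1) .
qed

end

end

end

definition RN_density :: "'a measure \<Rightarrow> 'a measure \<Rightarrow> 'a \<Rightarrow> real" where
  "RN_density Q P z = enn2real (RN_deriv Q P z)"

locale dominated_prob_spaces = P: prob_space P + Q: prob_space Q for P Q :: "'a measure" +
  assumes sets_eq: "sets P = sets Q"
    and abs_cont: "absolutely_continuous Q P"
begin

lemma space_eq: "space P = space Q"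
  by (rule sets_eq_imp_space_eq[OF sets_eq])

lemma RN_density_measurable [measurable]: "RN_density Q P \<in> borel_measurable Q"
  unfolding RN_density_def by measurable

lemma RN_density_nonneg: "0 \<le> RN_density Q P z"
  by (simp add: RN_density_def)

lemma
  assumes "f \<in> borel_measurable Q"
  shows integral_eq_integral_RN_density: "integral\<^sup>L P f = (\<integral>z. RN_density Q P z * f z \<partial>Q)"
    and integrable_iff_integrable_RN_density:
      "integrable P f \<longleftrightarrow> integrable Q (\<lambda>z. RN_density Q P z * f z)"
  unfolding RN_density_def
  by (rule Q.RN_deriv_integral Q.RN_deriv_integrable P.sigma_finite_measure_axioms abs_cont sets_eq assms)+

lemma
  shows integrable_RN_density: "integrable Q (RN_density Q P)"
    and integral_RN_density: "(\<integral>z. RN_density Q P z \<partial>Q) = 1"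
  using integrable_iff_integrable_RN_density[of "\<lambda>_. 1"] integral_eq_integral_RN_density[of "\<lambda>_. 1"]
  by (simp_all add: P.prob_space)

lemma KL_div_eq_integral_RN_density:
  assumes "integrable P (\<lambda>z. ln (RN_density Q P z))"
  shows "KL_div P Q = (\<integral>z. RN_density Q P z * ln (RN_density Q P z) \<partial>Q)"
    and "integrable Q (\<lambda>z. RN_density Q P z * ln (RN_density Q P z))"
  using assms sets_eq abs_cont
    integral_eq_integral_RN_density[of "\<lambda>z. ln (RN_density Q P z)"]
    integrable_iff_integrable_RN_density[of "\<lambda>z. ln (RN_density Q P z)"]
  by (simp_all add: KL_div_def RN_density_def)

lemma mmd_le_L1_distance:
  fixes h :: "'a \<Rightarrow> 'a \<Rightarrow> real" and c :: real
  assumes h_measurable [measurable]: "(\<lambda>(z, w). h z w) \<in> borel_measurable (Q \<Otimes>\<^sub>M Q)"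
    and symmetric: "\<And>z w. z \<in> space Q \<Longrightarrow> w \<in> space Q \<Longrightarrow> h z w = h w z"
    and bounded: "\<And>z w. z \<in> space Q \<Longrightarrow> w \<in> space Q \<Longrightarrow> \<bar>h z w\<bar> \<le> c"
  shows "(\<integral>z. \<integral>w. h z w \<partial>P \<partial>P) - 2 * (\<integral>z. \<integral>w. h z w \<partial>Q \<partial>P) + (\<integral>z. \<integral>w. h z w \<partial>Q \<partial>Q)
    \<le> c * (\<integral>z. \<bar>RN_density Q P z - 1\<bar> \<partial>Q)\<^sup>2"
proof -
  let ?\<rho> = "RN_density Q P"
  have section_measurable: "h z \<in> borel_measurable Q" if "z \<in> space Q" for z
    using measurable_Pair2[OF h_measurable that] by (simp only: prod.case)
  have "(\<integral>w. h z w \<partial>P) = (\<integral>w. ?\<rho> w * h z w \<partial>Q)" if "z \<in> space P" for z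
    using that unfolding space_eq by (intro integral_eq_integral_RN_density section_measurable)
  then have "(\<integral>z. \<integral>w. h z w \<partial>P \<partial>P) = (\<integral>z. \<integral>w. ?\<rho> w * h z w \<partial>Q \<partial>P)"
    by (rule Bochner_Integration.integral_cong[OF refl])
  also have "\<dots> = (\<integral>z. ?\<rho> z * (\<integral>w. ?\<rho> w * h z w \<partial>Q) \<partial>Q)"
  proof (rule integral_eq_integral_RN_density)
    have "(\<lambda>(z, w). ?\<rho> w * h z w) \<in> borel_measurable (Q \<Otimes>\<^sub>M Q)"
      using measurable_compose[OF measurable_snd RN_density_measurable] h_measurable
      unfolding case_prod_beta by (rule borel_measurable_times)
    then show "(\<lambda>z. \<integral>w. ?\<rho> w * h z w \<partial>Q) \<in> borel_measurable Q"
      by (rule Q.borel_measurable_lebesgue_integral)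
  qed
  finally have PP: "(\<integral>z. \<integral>w. h z w \<partial>P \<partial>P) = (\<integral>z. ?\<rho> z * (\<integral>w. ?\<rho> w * h z w \<partial>Q) \<partial>Q)" .
  have PQ: "(\<integral>z. \<integral>w. h z w \<partial>Q \<partial>P) = (\<integral>z. ?\<rho> z * (\<integral>w. h z w \<partial>Q) \<partial>Q)"
    by (intro integral_eq_integral_RN_density Q.borel_measurable_lebesgue_integral h_measurable)
  show ?thesis
    unfolding PP PQ
    by (rule Q.mmd_density_le[OF RN_density_measurable _ integrable_RN_density integral_RN_density
          h_measurable symmetric bounded]) (simp_all add: RN_density_nonneg)
qed

end

lemma pd_kernel_two_points_nonneg:
  assumes "pd_kernel S k" "x \<in> S" "y \<in> S"
  shows "0 \<le> a\<^sup>2 * k x x + 2 * a * b * k x y + b\<^sup>2 * k y y"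
proof -
  let ?x = "\<lambda>i::nat. if i = 0 then x else y"
  let ?c = "\<lambda>i::nat. if i = 0 then a else b"
  have "0 \<le> (\<Sum>i<2. \<Sum>j<2. ?c i * ?c j * k (?x i) (?x j))"
    using assms unfolding pd_kernel_def by auto
  moreover have "k y x = k x y"
    using assms unfolding pd_kernel_def by auto
  ultimately show ?thesis
    by (simp add: numeral_2_eq_2 power2_eq_square algebra_simps)
qed

lemma pd_kernel_diag_nonneg: "pd_kernel S k \<Longrightarrow> x \<in> S \<Longrightarrow> 0 \<le> k x x"
  using pd_kernel_two_points_nonneg[of S k x x 1 0] by simp

lemma pd_kernel_Cauchy_Schwarz:
  assumes "pd_kernel S k" "x \<in> S" "y \<in> S"
  shows "(k x y)\<^sup>2 \<le> k x x * k y y"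
proof (cases "k y y = 0")
  case False
  have "0 \<le> (k y y)\<^sup>2 * k x x + 2 * k y y * (- k x y) * k x y + (- k x y)\<^sup>2 * k y y"
    by (rule pd_kernel_two_points_nonneg[OF assms])
  then have "0 \<le> k y y * (k x x * k y y - (k x y)\<^sup>2)"
    by (simp add: power2_eq_square algebra_simps)
  moreover have "0 < k y y"
    using pd_kernel_diag_nonneg[OF assms(1,3)] False by simp
  ultimately show ?thesis
    by (simp add: zero_le_mult_iff)
next
  case True
  have "k x y = 0"
  proof (rule ccontr)
    assume "k x y \<noteq> 0"
    have "0 \<le> 1\<^sup>2 * k x x + 2 * 1 * (- (k x x + 1) / (2 * k x y)) * k x y"
      using pd_kernel_two_points_nonneg[OF assms, of 1 "- (k x x + 1) / (2 * k x y)"] True by simp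
    with \<open>k x y \<noteq> 0\<close> show False
      by (simp add: field_simps)
  qed
  with True show ?thesis
    by simp
qed

lemma product_kernel_abs_le:
  fixes k :: "'a \<Rightarrow> 'a \<Rightarrow> real" and l :: "'b \<Rightarrow> 'b \<Rightarrow> real"
  assumes k: "pd_kernel A k" and l: "pd_kernel B l"
    and diag_bound: "\<forall>x\<in>A. \<forall>y\<in>B. k x x * l y y \<le> C"
    and "x \<in> A" "x' \<in> A" "y \<in> B" "y' \<in> B"
  shows "\<bar>k x x' * l y y'\<bar> \<le> C"
proof -
  have diag: "0 \<le> k x x" "0 \<le> k x' x'" "0 \<le> l y y" "0 \<le> l y' y'"
    using assms pd_kernel_diag_nonneg[OF k] pd_kernel_diag_nonneg[OF l] by auto
  have diag_le: "k x x * l y y \<le> C" "k x' x' * l y' y' \<le> C"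
    using diag_bound assms by auto
  have "0 \<le> C"
    using diag_le(1) diag(1,3) by (meson mult_nonneg_nonneg order.trans)
  have "\<bar>k x x' * l y y'\<bar>\<^sup>2 = (k x x')\<^sup>2 * (l y y')\<^sup>2"
    by (simp add: power_mult_distrib)
  also have "\<dots> \<le> (k x x * k x' x') * (l y y * l y' y')"
    using pd_kernel_Cauchy_Schwarz[OF k \<open>x \<in> A\<close> \<open>x' \<in> A\<close>]
      pd_kernel_Cauchy_Schwarz[OF l \<open>y \<in> B\<close> \<open>y' \<in> B\<close>] diag
    by (intro mult_mono mult_nonneg_nonneg zero_le_power2)
  also have "\<dots> = (k x x * l y y) * (k x' x' * l y' y')"
    by (simp only: ac_simps)
  also have "\<dots> \<le> C * C"
    using diag_le diag \<open>0 \<le> C\<close> by (intro mult_mono mult_nonneg_nonneg)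
  also have "\<dots> = C\<^sup>2"
    by (simp add: power2_eq_square)
  finally show ?thesis
    using \<open>0 \<le> C\<close> by (rule power2_le_imp_le)
qed

locale hsic_setting =
  fixes MX :: "'a measure" and MY :: "'b measure" and P :: "('a \<times> 'b) measure"
    and k :: "'a \<Rightarrow> 'a \<Rightarrow> real" and l :: "'b \<Rightarrow> 'b \<Rightarrow> real" and c :: real
  assumes prob_space_P: "prob_space P"
    and sets_P [measurable_cong]: "sets P = sets (MX \<Otimes>\<^sub>M MY)"
    and k_measurable [measurable]: "(\<lambda>(x, x'). k x x') \<in> borel_measurable (MX \<Otimes>\<^sub>M MX)"
    and l_measurable [measurable]: "(\<lambda>(y, y'). l y y') \<in> borel_measurable (MY \<Otimes>\<^sub>M MY)"
    and k_symmetric: "\<And>x x'. x \<in> space MX \<Longrightarrow> x' \<in> space MX \<Longrightarrow> k x x' = k x' x"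
    and l_symmetric: "\<And>y y'. y \<in> space MY \<Longrightarrow> y' \<in> space MY \<Longrightarrow> l y y' = l y' y"
    and kernel_bounded: "\<And>x x' y y'. x \<in> space MX \<Longrightarrow> x' \<in> space MX \<Longrightarrow> y \<in> space MY \<Longrightarrow>
      y' \<in> space MY \<Longrightarrow> \<bar>k x x' * l y y'\<bar> \<le> c"
begin

definition "Px = distr P MX fst"
definition "Py = distr P MY snd"
definition "Q = Px \<Otimes>\<^sub>M Py"
definition "h z w = k (fst z) (fst w) * l (snd z) (snd w)"

lemma sets_Px [measurable_cong]: "sets Px = sets MX"
  by (simp add: Px_def)

lemma sets_Py [measurable_cong]: "sets Py = sets MY"
  by (simp add: Py_def)

lemma sets_Q [measurable_cong]: "sets Q = sets (MX \<Otimes>\<^sub>M MY)"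
  unfolding Q_def by (intro sets_pair_measure_cong sets_Px sets_Py)

lemma space_P: "space P = space MX \<times> space MY"
  using sets_eq_imp_space_eq[OF sets_P] by (simp add: space_pair_measure)

lemma space_Q: "space Q = space MX \<times> space MY"
  using sets_eq_imp_space_eq[OF sets_Q] by (simp add: space_pair_measure)

lemma space_Py: "space Py = space MY"
  by (simp add: Py_def)

lemma fst_measurable: "fst \<in> measurable P MX"
  by measurable

lemma prob_space_Px: "prob_space Px"
  unfolding Px_def by (rule prob_space.prob_space_distr[OF prob_space_P]) measurable

lemma prob_space_Py: "prob_space Py"
  unfolding Py_def by (rule prob_space.prob_space_distr[OF prob_space_P]) measurable

lemma prob_space_Q: "prob_space Q"
  unfolding Q_def by (intro prob_space_pair prob_space_Px prob_space_Py)

lemma h_measurable [measurable]: "(\<lambda>(z, w). h z w) \<in> borel_measurable ((MX \<Otimes>\<^sub>M MY) \<Otimes>\<^sub>M (MX \<Otimes>\<^sub>M MY))"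
  unfolding h_def by measurable

lemma h_bounded: "z \<in> space MX \<times> space MY \<Longrightarrow> w \<in> space MX \<times> space MY \<Longrightarrow> \<bar>h z w\<bar> \<le> c"
  unfolding h_def by (auto intro: kernel_bounded)

lemma h_symmetric: "z \<in> space MX \<times> space MY \<Longrightarrow> w \<in> space MX \<times> space MY \<Longrightarrow> h z w = h w z"
  unfolding h_def using k_symmetric l_symmetric by auto

lemma integral_Q_eq_iterated:
  fixes g :: "'a \<times> 'b \<Rightarrow> real"
  assumes [measurable]: "g \<in> borel_measurable (MX \<Otimes>\<^sub>M MY)"
    and bound: "\<And>z. z \<in> space MX \<times> space MY \<Longrightarrow> \<bar>g z\<bar> \<le> C"
  shows "integral\<^sup>L Q g = (\<integral>a. \<integral>y. g (fst a, y) \<partial>Py \<partial>P)"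
proof -
  have "integral\<^sup>L Q g = (\<integral>x. \<integral>y. g (x, y) \<partial>Py \<partial>Px)"
    unfolding Q_def using bound
    by (intro integral_pair_bounded[where f = g and C = C] prob_space_Px prob_space_Py)
      (auto simp: Px_def Py_def)
  also have "\<dots> = (\<integral>a. \<integral>y. g (fst a, y) \<partial>Py \<partial>P)"
  proof -
    have "(\<lambda>x. \<integral>y. g (x, y) \<partial>Py) \<in> borel_measurable MX"
      by (rule sigma_finite_measure.borel_measurable_lebesgue_integral
          [OF prob_space_imp_sigma_finite[OF prob_space_Py]]) measurable
    then show ?thesis
      unfolding Px_def by (rule integral_distr[OF fst_measurable])
  qed
  finally show ?thesis .
qed

lemma integral_sample_eq_iterated:
  fixes g :: "('a \<times> 'b) \<times> ('a \<times> 'b) \<times> 'b \<times> 'b \<Rightarrow> real"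
  assumes [measurable]: "g \<in> borel_measurable (P \<Otimes>\<^sub>M P \<Otimes>\<^sub>M Py \<Otimes>\<^sub>M Py)"
    and bound: "\<And>a b y y'. a \<in> space P \<Longrightarrow> b \<in> space P \<Longrightarrow> y \<in> space MY \<Longrightarrow> y' \<in> space MY \<Longrightarrow>
      \<bar>g (a, b, y, y')\<bar> \<le> C"
  shows "integral\<^sup>L (P \<Otimes>\<^sub>M P \<Otimes>\<^sub>M Py \<Otimes>\<^sub>M Py) g = (\<integral>a. \<integral>b. \<integral>y. \<integral>y'. g (a, b, y, y') \<partial>Py \<partial>Py \<partial>P \<partial>P)"
proof -
  have prob_YY: "prob_space (Py \<Otimes>\<^sub>M Py)" and prob_PYY: "prob_space (P \<Otimes>\<^sub>M Py \<Otimes>\<^sub>M Py)"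
    by (intro prob_space_pair prob_space_P prob_space_Py)+
  have inner: "(\<integral>s. g (a, b, s) \<partial>(Py \<Otimes>\<^sub>M Py)) = (\<integral>y. \<integral>y'. g (a, b, y, y') \<partial>Py \<partial>Py)"
    if "a \<in> space P" "b \<in> space P" for a b
    using that bound measurable_Pair2[OF measurable_Pair2[OF assms(1)]]
    by (intro integral_pair_bounded[where f = "\<lambda>s. g (a, b, s)" and C = C] prob_space_Py)
      (auto simp: space_Py space_pair_measure intro!: bound)
  have "(\<integral>r. g (a, r) \<partial>(P \<Otimes>\<^sub>M Py \<Otimes>\<^sub>M Py)) = (\<integral>b. \<integral>y. \<integral>y'. g (a, b, y, y') \<partial>Py \<partial>Py \<partial>P)"
    if "a \<in> space P" for a
  proof -
    have "(\<integral>r. g (a, r) \<partial>(P \<Otimes>\<^sub>M Py \<Otimes>\<^sub>M Py)) = (\<integral>b. \<integral>s. g (a, b, s) \<partial>(Py \<Otimes>\<^sub>M Py) \<partial>P)"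
      using that bound measurable_Pair2[OF assms(1) that]
      by (intro integral_pair_bounded[where f = "\<lambda>r. g (a, r)" and C = C] prob_space_P prob_YY)
        (auto simp: space_Py space_pair_measure intro!: bound)
    also have "\<dots> = (\<integral>b. \<integral>y. \<integral>y'. g (a, b, y, y') \<partial>Py \<partial>Py \<partial>P)"
      using that inner by (intro Bochner_Integration.integral_cong) auto
    finally show ?thesis .
  qed
  moreover have "integral\<^sup>L (P \<Otimes>\<^sub>M P \<Otimes>\<^sub>M Py \<Otimes>\<^sub>M Py) g = (\<integral>a. \<integral>r. g (a, r) \<partial>(P \<Otimes>\<^sub>M Py \<Otimes>\<^sub>M Py) \<partial>P)"
    using bound by (intro integral_pair_bounded[where C = C] prob_space_P prob_PYY)
      (auto simp: space_Py space_pair_measure intro!: bound)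
  ultimately show ?thesis
    by (auto intro: Bochner_Integration.integral_cong)
qed

lemma h_section_measurable: "z \<in> space MX \<times> space MY \<Longrightarrow> h z \<in> borel_measurable (MX \<Otimes>\<^sub>M MY)"
  using measurable_Pair2[OF h_measurable] by (simp add: space_pair_measure)

lemma integral_Q_measurable: "(\<lambda>z. \<integral>w. h z w \<partial>Q) \<in> borel_measurable (MX \<Otimes>\<^sub>M MY)"
  by (rule sigma_finite_measure.borel_measurable_lebesgue_integral
      [OF prob_space_imp_sigma_finite[OF prob_space_Q]]) (simp add: measurable_cong_sets[OF refl sets_Q])

lemma HSIC_joint_term: "(\<integral>s. h (fst s) (fst (snd s)) \<partial>(P \<Otimes>\<^sub>M P \<Otimes>\<^sub>M Py \<Otimes>\<^sub>M Py)) = (\<integral>a. \<integral>b. h a b \<partial>P \<partial>P)"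
  using integral_sample_eq_iterated[of "\<lambda>s. h (fst s) (fst (snd s))" c] h_bounded prob_space.prob_space[OF prob_space_Py]
  by (simp add: space_P)

lemma HSIC_cross_term:
  "(\<integral>s. h (fst s) (fst (fst (snd s)), fst (snd (snd s))) \<partial>(P \<Otimes>\<^sub>M P \<Otimes>\<^sub>M Py \<Otimes>\<^sub>M Py))
    = (\<integral>a. \<integral>w. h a w \<partial>Q \<partial>P)"
proof -
  have "(\<integral>s. h (fst s) (fst (fst (snd s)), fst (snd (snd s))) \<partial>(P \<Otimes>\<^sub>M P \<Otimes>\<^sub>M Py \<Otimes>\<^sub>M Py))
      = (\<integral>a. \<integral>b. \<integral>y. h a (fst b, y) \<partial>Py \<partial>P \<partial>P)"
    using integral_sample_eq_iterated[of "\<lambda>s. h (fst s) (fst (fst (snd s)), fst (snd (snd s)))" c]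
      h_bounded prob_space.prob_space[OF prob_space_Py]
    by (auto simp: space_P mem_Times_iff)
  also have "\<dots> = (\<integral>a. \<integral>w. h a w \<partial>Q \<partial>P)"
  proof (rule Bochner_Integration.integral_cong[OF refl])
    fix a assume "a \<in> space P"
    then show "(\<integral>b. \<integral>y. h a (fst b, y) \<partial>Py \<partial>P) = (\<integral>w. h a w \<partial>Q)"
      using h_bounded by (intro integral_Q_eq_iterated[symmetric, where C = c] h_section_measurable)
        (auto simp: space_P)
  qed
  finally show ?thesis .
qed

lemma abs_integral_Q_le: "z \<in> space MX \<times> space MY \<Longrightarrow> \<bar>\<integral>w. h z w \<partial>Q\<bar> \<le> c"
  using h_bounded h_section_measurable
  by (intro prob_space.abs_integral_le_bound[OF prob_space_Q]) (auto simp: space_Q measurable_cong_sets[OF sets_Q refl])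

lemma iterated_integral_eq_Py_Q:
  assumes x: "x \<in> space MX"
  shows "(\<integral>b. \<integral>y. \<integral>y'. h (x, y) (fst b, y') \<partial>Py \<partial>Py \<partial>P) = (\<integral>y. \<integral>w. h (x, y) w \<partial>Q \<partial>Py)"
proof -
  define G where "G p = (\<integral>y'. h (x, snd p) (fst (fst p), y') \<partial>Py)" for p :: "('a \<times> 'b) \<times> 'b"
  have "(\<lambda>(p, y'). h (x, snd p) (fst (fst p), y')) \<in> borel_measurable ((P \<Otimes>\<^sub>M Py) \<Otimes>\<^sub>M Py)"
    using x by measurable
  then have G_measurable: "G \<in> borel_measurable (P \<Otimes>\<^sub>M Py)"
    unfolding G_def
    by (rule sigma_finite_measure.borel_measurable_lebesgue_integral
        [OF prob_space_imp_sigma_finite[OF prob_space_Py]])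
  have "\<bar>G (b, y)\<bar> \<le> c" if "b \<in> space P" "y \<in> space Py" for b y
    unfolding G_def using that x h_bounded
    by (intro prob_space.abs_integral_le_bound[OF prob_space_Py]) (auto simp: space_P space_Py)
  then have "(\<integral>b. \<integral>y. G (b, y) \<partial>Py \<partial>P) = (\<integral>y. \<integral>b. G (b, y) \<partial>P \<partial>Py)"
    by (intro iterated_integral_swap_bounded[symmetric, OF prob_space_P prob_space_Py G_measurable])
  also have "\<dots> = (\<integral>y. \<integral>w. h (x, y) w \<partial>Q \<partial>Py)"
  proof (rule Bochner_Integration.integral_cong[OF refl])
    fix y assume "y \<in> space Py"
    with x show "(\<integral>b. G (b, y) \<partial>P) = (\<integral>w. h (x, y) w \<partial>Q)"
      unfolding G_def fst_conv snd_conv using h_bounded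
      by (intro integral_Q_eq_iterated[symmetric, where C = c] h_section_measurable) (auto simp: space_Py)
  qed
  finally show ?thesis
    by (simp add: G_def)
qed

lemma HSIC_marginal_term:
  "(\<integral>s. h (fst (fst s), fst (snd (snd s))) (fst (fst (snd s)), snd (snd (snd s)))
      \<partial>(P \<Otimes>\<^sub>M P \<Otimes>\<^sub>M Py \<Otimes>\<^sub>M Py))
    = (\<integral>z. \<integral>w. h z w \<partial>Q \<partial>Q)"
proof -
  have "(\<integral>s. h (fst (fst s), fst (snd (snd s))) (fst (fst (snd s)), snd (snd (snd s)))
        \<partial>(P \<Otimes>\<^sub>M P \<Otimes>\<^sub>M Py \<Otimes>\<^sub>M Py))
      = (\<integral>a. \<integral>b. \<integral>y. \<integral>y'. h (fst a, y) (fst b, y') \<partial>Py \<partial>Py \<partial>P \<partial>P)"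
    using integral_sample_eq_iterated[of
        "\<lambda>s. h (fst (fst s), fst (snd (snd s))) (fst (fst (snd s)), snd (snd (snd s)))" c]
      h_bounded
    by (auto simp: space_P mem_Times_iff)
  also have "\<dots> = (\<integral>a. \<integral>y. \<integral>w. h (fst a, y) w \<partial>Q \<partial>Py \<partial>P)"
    using iterated_integral_eq_Py_Q by (intro Bochner_Integration.integral_cong) (auto simp: space_P)
  also have "\<dots> = (\<integral>z. \<integral>w. h z w \<partial>Q \<partial>Q)"
    using abs_integral_Q_le
    by (intro integral_Q_eq_iterated[symmetric, where C = c] integral_Q_measurable) auto
  finally show ?thesis .
qed

lemma HSIC_eq_mmd:
  "HSIC MX MY P k l = (\<integral>z. \<integral>w. h z w \<partial>P \<partial>P) - 2 * (\<integral>z. \<integral>w. h z w \<partial>Q \<partial>P) + (\<integral>z. \<integral>w. h z w \<partial>Q \<partial>Q)"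
proof -
  let ?S = "P \<Otimes>\<^sub>M P \<Otimes>\<^sub>M Py \<Otimes>\<^sub>M Py"
  define F1 F2 F3 :: "('a \<times> 'b) \<times> ('a \<times> 'b) \<times> 'b \<times> 'b \<Rightarrow> real"
    where "F1 s = h (fst s) (fst (snd s))"
      and "F2 s = h (fst s) (fst (fst (snd s)), fst (snd (snd s)))"
      and "F3 s = h (fst (fst s), fst (snd (snd s))) (fst (fst (snd s)), snd (snd (snd s)))" for s
  have "prob_space ?S"
    by (intro prob_space_pair prob_space_P prob_space_Py)
  then have integrable: "integrable ?S F1" "integrable ?S F2" "integrable ?S F3"
    unfolding F1_def F2_def F3_def using h_bounded
    by (auto intro!: finite_measure.integrable_const_bound[OF prob_space.finite_measure, where B = c] AE_I2
        simp: space_pair_measure space_P space_Py mem_Times_iff)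
  have "HSIC MX MY P k l = (\<integral>s. F1 s - 2 * F2 s + F3 s \<partial>?S)"
    unfolding HSIC_def Py_def[symmetric] F1_def F2_def F3_def h_def
    by (intro Bochner_Integration.integral_cong) (auto split: prod.splits)
  also have "\<dots> = integral\<^sup>L ?S F1 - 2 * integral\<^sup>L ?S F2 + integral\<^sup>L ?S F3"
    using integrable by simp
  finally show ?thesis
    unfolding F1_def[abs_def] F2_def[abs_def] F3_def[abs_def]
      HSIC_joint_term HSIC_cross_term HSIC_marginal_term .
qed

lemma mutual_info_eq_KL_div: "mutual_info MX MY P = KL_div P Q"
  by (simp add: mutual_info_def Q_def Px_def Py_def)

lemma dominated_prob_spaces_P_Q: "absolutely_continuous Q P \<Longrightarrow> dominated_prob_spaces P Q"
  using prob_space_P prob_space_Q sets_P sets_Q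
  by (simp add: dominated_prob_spaces_def dominated_prob_spaces_axioms_def)

lemma HSIC_le_L1_distance:
  assumes "absolutely_continuous Q P"
  shows "HSIC MX MY P k l \<le> c * (\<integral>z. \<bar>RN_density Q P z - 1\<bar> \<partial>Q)\<^sup>2"
proof -
  interpret dominated_prob_spaces P Q
    using assms by (rule dominated_prob_spaces_P_Q)
  have "(\<lambda>(z, w). h z w) \<in> borel_measurable (Q \<Otimes>\<^sub>M Q)"
    using h_measurable by (simp add: measurable_cong_sets[OF sets_pair_measure_cong[OF sets_Q sets_Q] refl])
  then show ?thesis
    unfolding HSIC_eq_mmd using h_symmetric h_bounded
    by (intro mmd_le_L1_distance) (auto simp: space_Q)
qed

end

lemma hsic_setting_of_pd_kernels:
  assumes "prob_space P" "sets P = sets (MX \<Otimes>\<^sub>M MY)"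
    and k: "pd_kernel (space MX) k" and l: "pd_kernel (space MY) l"
    and "(\<lambda>(x, x'). k x x') \<in> borel_measurable (MX \<Otimes>\<^sub>M MX)"
    and "(\<lambda>(y, y'). l y y') \<in> borel_measurable (MY \<Otimes>\<^sub>M MY)"
    and diag_bound: "\<forall>x\<in>space MX. \<forall>y\<in>space MY. k x x * l y y \<le> C"
  shows "hsic_setting MX MY P k l C"
proof -
  have symmetric: "\<And>x x'. x \<in> space MX \<Longrightarrow> x' \<in> space MX \<Longrightarrow> k x x' = k x' x"
    "\<And>y y'. y \<in> space MY \<Longrightarrow> y' \<in> space MY \<Longrightarrow> l y y' = l y' y"
    using k l by (simp_all add: pd_kernel_def)
  show ?thesis
    using assms(1,2,5,6) symmetric product_kernel_abs_le[OF k l diag_bound]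
    by (rule hsic_setting.intro)
qed

lemma HSIC_bounds_of_pinsker_bretagnolle_huber:
  fixes H L K \<nu> :: real
  assumes "0 < \<nu>" "H \<le> \<nu>\<^sup>2 * L\<^sup>2" "L\<^sup>2 \<le> 2 * K" "exp (- K) \<le> 1 - L\<^sup>2 / 4"
  shows "H / (2 * \<nu>\<^sup>2) \<le> K" "H / (4 * \<nu>\<^sup>2) < 1" "- ln (1 - H / (4 * \<nu>\<^sup>2)) \<le> K"
proof -
  have "H / \<nu>\<^sup>2 \<le> L\<^sup>2"
    using assms(1,2) by (simp add: divide_le_eq mult.commute)
  then have scaled: "H / (2 * \<nu>\<^sup>2) \<le> L\<^sup>2 / 2" "H / (4 * \<nu>\<^sup>2) \<le> L\<^sup>2 / 4"
    by (simp_all add: field_simps)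
  with assms(3) show "H / (2 * \<nu>\<^sup>2) \<le> K"
    by linarith
  have exp_le: "exp (- K) \<le> 1 - H / (4 * \<nu>\<^sup>2)"
    using assms(4) scaled(2) by linarith
  moreover have "0 < exp (- K)"
    by simp
  ultimately show less_one: "H / (4 * \<nu>\<^sup>2) < 1"
    by linarith
  have "- K \<le> ln (1 - H / (4 * \<nu>\<^sup>2))"
    using exp_le less_one by (subst ln_ge_iff) auto
  then show "- ln (1 - H / (4 * \<nu>\<^sup>2)) \<le> K"
    by linarith
qed

theorem proposition3:
  fixes MX :: "'a measure" and MY :: "'b measure" and P :: "('a \<times> 'b) measure"
    and k :: "'a \<Rightarrow> 'a \<Rightarrow> real" and l :: "'b \<Rightarrow> 'b \<Rightarrow> real" and \<nu> :: real
  assumes "prob_space P"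
    and "sets P = sets (MX \<Otimes>\<^sub>M MY)"
    and "pd_kernel (space MX) k" and "pd_kernel (space MY) l"
    and "(\<lambda>(x, x'). k x x') \<in> borel_measurable (MX \<Otimes>\<^sub>M MX)"
    and "(\<lambda>(y, y'). l y y') \<in> borel_measurable (MY \<Otimes>\<^sub>M MY)"
    and "\<nu> > 0"
    and "\<forall>x\<in>space MX. \<forall>y\<in>space MY. k x x * l y y \<le> \<nu>\<^sup>2"
  shows "ereal (HSIC MX MY P k l / (2 * \<nu>\<^sup>2)) \<le> mutual_info MX MY P \<and>
         (if HSIC MX MY P k l / (4 * \<nu>\<^sup>2) < 1
          then ereal (- ln (1 - HSIC MX MY P k l / (4 * \<nu>\<^sup>2)))
          else \<infinity>) \<le> mutual_info MX MY P"
proof -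
  interpret hsic_setting MX MY P k l "\<nu>\<^sup>2"
    using assms(1-6,8) by (rule hsic_setting_of_pd_kernels)
  show ?thesis
  proof (cases "absolutely_continuous Q P \<and> integrable P (\<lambda>z. ln (RN_density Q P z))")
    case False
    then show ?thesis
      by (auto simp: mutual_info_eq_KL_div KL_div_def RN_density_def)
  next
    case True
    then interpret dominated_prob_spaces P Q
      by (simp add: dominated_prob_spaces_P_Q)
    note KL = KL_div_eq_integral_RN_density[OF conjunct2[OF True]]
    note density = RN_density_measurable RN_density_nonneg integrable_RN_density integral_RN_density
    note bounds = HSIC_bounds_of_pinsker_bretagnolle_huber[OF \<open>\<nu> > 0\<close>
        HSIC_le_L1_distance[OF conjunct1[OF True]]
        Q.pinsker_density[OF density KL(2)] Q.bretagnolle_huber_density[OF density KL(2)]]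
    show ?thesis
      using bounds by (simp add: mutual_info_eq_KL_div KL(1))
  qed
qed

end
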